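(* Let $X\in\mathbb{R}^{n\times p}$, $\lambda>0$, $\varepsilon>0$, and let $y$ be a random vector in $\mathbb{R}^n$ whose distribution is absolutely continuous with respect to Lebesgue measure on $\mathbb{R}^n$. If $(\hat\beta_0,\hat\beta^+,\hat\beta^-,\hat\Theta)$ solves the weak hierarchical lasso with elastic net penalty $\varepsilon$ (defined in the context), then with probability one weak hierarchy holds: for all $j\neq k$, $$\frac{\hat\Theta_{jk}+\hat\Theta_{kj}}{2}\neq0\implies \hat\beta^+_j-\hat\beta^-_j\neq0\ \text{ or }\ \hat\beta^+_k-\hat\beta^-_k\neq0.$$
   Context: For $\Theta\in\mathbb{R}^{p\times p}$, $\Theta_j$ is its $j$th row, $\|\Theta\|_1=\sum_{j\ne k}|\Theta_{jk}|$, $\|\Theta\|_F$ the Frobenius norm; $X_{i\cdot}$ is the $i$th row of $X$ and $\mathbf 1$ the all-ones vector. The loss is $q(\beta_0,\beta^+,\beta^-,\Theta)=\frac12\sum_{i=1}^n\big(y_i-\beta_0-X_{i\cdot}(\beta^+-\beta^-)-\frac12X_{i\cdot}\Theta X_{i\cdot}^T\big)^2+\frac{\varepsilon}{2}\big(\|\Theta\|_F^2+\|\beta^+\|^2+\|\beta^-\|^2\big)$. The weak hierarchical lasso with elastic net penalty $\varepsilon$ is: minimize over $\beta_0\in\mathbb{R}$, $\beta^\pm\in\mathbb{R}^p$, $\Theta\in\mathbb{R}^{p\times p}$ with $\Theta_{jj}=0$ for all $j$ (no symmetry required), the objective $q(\beta_0,\beta^+,\beta^-,\Theta)+\lambda\mathbf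 1^T(\beta^++\beta^-)+\frac{\lambda}{2}\|\Theta\|_1$ subject to, for each $j$, $\|\Theta_j\|_1\le\beta^+_j+\beta^-_j$, $\beta^+_j\ge0$, $\beta^-_j\ge0$. *)

theory Defs
  imports "HOL-Analysis.Analysis" "HOL-Probability.Probability"
begin

text \<open>Design matrix X has rows X$i (i ranging over the finite type 'n, n observations),
  each a vector in real^'p. Theta is a p x p matrix, Theta$j is its j-th row.\<close>

definition Theta_l1 :: "real^'p^'p \<Rightarrow> real" where
  "Theta_l1 Th = (\<Sum>j\<in>UNIV. \<Sum>k\<in>UNIV - {j}. \<bar>Th$j$k\<bar>)"

definition row_l1 :: "real^'p \<Rightarrow> real" where
  "row_l1 v = (\<Sum>k\<in>UNIV. \<bar>v$k\<bar>)"

definition frob_sq :: "real^'p^'p \<Rightarrow> real" where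
  "frob_sq Th = (\<Sum>j\<in>UNIV. \<Sum>k\<in>UNIV. (Th$j$k)\<^sup>2)"

definition whl_loss ::
  "real^'p^'n \<Rightarrow> real \<Rightarrow> real^'n \<Rightarrow> real \<Rightarrow> real^'p \<Rightarrow> real^'p \<Rightarrow> real^'p^'p \<Rightarrow> real" where
  "whl_loss X eps y b0 bp bm Th =
     (1/2) * (\<Sum>i\<in>UNIV. (y$i - b0 - (X$i) \<bullet> (bp - bm) - (1/2) * ((X$i) \<bullet> (Th *v (X$i))))\<^sup>2)
     + (eps/2) * (frob_sq Th + (norm bp)\<^sup>2 + (norm bm)\<^sup>2)"

definition whl_objective ::
  "real^'p^'n \<Rightarrow> real \<Rightarrow> real \<Rightarrow> real^'n \<Rightarrow> real \<Rightarrow> real^'p \<Rightarrow> real^'p \<Rightarrow> real^'p^'p \<Rightarrow> real" where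
  "whl_objective X lam eps y b0 bp bm Th =
     whl_loss X eps y b0 bp bm Th + lam * (\<Sum>j\<in>UNIV. bp$j + bm$j) + (lam/2) * Theta_l1 Th"

definition whl_feasible :: "real^'p \<Rightarrow> real^'p \<Rightarrow> real^'p^'p \<Rightarrow> bool" where
  "whl_feasible bp bm Th \<longleftrightarrow>
     (\<forall>j. Th$j$j = 0) \<and>
     (\<forall>j. row_l1 (Th$j) \<le> bp$j + bm$j \<and> bp$j \<ge> 0 \<and> bm$j \<ge> 0)"

definition whl_solution ::
  "real^'p^'n \<Rightarrow> real \<Rightarrow> real \<Rightarrow> real^'n \<Rightarrow> real \<Rightarrow> real^'p \<Rightarrow> real^'p \<Rightarrow> real^'p^'p \<Rightarrow> bool" where
  "whl_solution X lam eps y b0 bp bm Th \<longleftrightarrow>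
     whl_feasible bp bm Th \<and>
     (\<forall>c0 cp cm Ch. whl_feasible cp cm Ch \<longrightarrow>
        whl_objective X lam eps y b0 bp bm Th \<le> whl_objective X lam eps y c0 cp cm Ch)"

definition weak_hierarchy :: "real^'p \<Rightarrow> real^'p \<Rightarrow> real^'p^'p \<Rightarrow> bool" where
  "weak_hierarchy bp bm Th \<longleftrightarrow>
     (\<forall>j k. j \<noteq> k \<longrightarrow> (Th$j$k + Th$k$j) / 2 \<noteq> 0 \<longrightarrow>
        bp$j - bm$j \<noteq> 0 \<or> bp$k - bm$k \<noteq> 0)"

end

theory Submission
  imports Defs
begin

text \<open>
  The objective is eps-strongly convex on a convex feasible set, so two solutions
  for responses y1, y2 with fits f1, f2 satisfy the monotonicity estimate
  <y2 - y1, f2 - f1> \<ge> |f2 - f1|^2 + eps |parameter difference|^2.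
  If weak hierarchy fails, there are j \<noteq> k with Theta_jk \<noteq> 0 and beta_j = beta_k = 0.
  Perturbing the solution shows that then beta^+_j, beta^+_k > 0, hence the residual is orthogonal
  to the columns X_j and X_k, and that one of these columns is not constant.
  For a nonconstant column u, the monotonicity estimate bounds the component of y2 - y1 along u
  by its component orthogonal to u whenever both residuals are orthogonal to u.  Hence the
  closure of the set of such y meets every line in direction u at most once and is a
  Lebesgue null set, which an absolutely continuous response avoids almost surely.
\<close>

section \<open>Null sets meeting lines at most once\<close>

lemma emeasure_lborel_eq_0_if_disjoint_translates:
  fixes A :: "'a::euclidean_space set" and v :: "nat \<Rightarrow> 'a"
  assumes A: "A \<in> sets lborel" "bounded A" and v: "bounded (range v)"
    and disj: "disjoint_family (\<lambda>k. (+) (v k) ` A)"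
  shows "emeasure lborel A = 0"
proof -
  define T where "T k = (+) (v k) ` A" for k
  have T_vimage: "T k = (+) (- v k) -` A" for k
    by (force simp: T_def)
  have T_sets: "T k \<in> sets lborel" for k
  proof -
    have "(+) (- v k) \<in> borel_measurable borel"
      by (intro borel_measurable_continuous_onI continuous_intros)
    thus ?thesis
      using A(1) by (metis T_vimage measurable_sets sets_lborel space_borel inf_top.right_neutral)
  qed
  have T_measure: "emeasure lborel (T k) = emeasure lborel A" for k
  proof -
    have "emeasure lborel A = emeasure (distr lborel borel ((+) (- v k))) A"
      by (simp add: lborel_distr_plus)
    also have "\<dots> = emeasure lborel (T k)"
      using A(1) by (subst emeasure_distr) (auto simp: T_vimage)
    finally show ?thesis ..
  qed
  have "(\<Union>k. T k) \<subseteq> (\<lambda>(x, y). x + y) ` (range v \<times> A)"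
    by (auto simp: T_def)
  hence "emeasure lborel (\<Union>k. T k) < \<infinity>"
    using bounded_plus[OF v A(2)] by (meson bounded_subset emeasure_bounded_finite)
  moreover have "emeasure lborel (\<Union>k. T k) = (\<Sum>k::nat. emeasure lborel A)"
    using suminf_emeasure[of T lborel] T_sets disj T_measure by (simp add: T_def[abs_def] image_subset_iff)
  ultimately have "(\<Sum>k::nat. emeasure lborel A) \<noteq> \<infinity>"
    by simp
  moreover obtain r where r: "emeasure lborel A = ennreal r" "0 \<le> r"
    using emeasure_bounded_finite[OF A(2)] by (cases "emeasure lborel A") auto
  ultimately have "summable (\<lambda>_::nat. r)"
    by (intro summable_suminf_not_top) auto
  thus ?thesis
    using r by (simp add: summable_const_iff)
qed

lemma null_sets_lborel_if_closed_meets_lines_once: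
  fixes C :: "'a::euclidean_space set"
  assumes C: "closed C" and u: "u \<noteq> 0"
    and once: "\<And>y s. y \<in> C \<Longrightarrow> y + s *\<^sub>R u \<in> C \<Longrightarrow> s = 0"
  shows "C \<in> null_sets lborel"
proof -
  define v where "v k = (1 / (real k + 1)) *\<^sub>R u" for k
  have "C \<inter> cball 0 R \<in> null_sets lborel" for R
  proof -
    have "disjoint_family (\<lambda>k. (+) (v k) ` (C \<inter> cball 0 R))"
    proof (auto simp: disjoint_family_on_def)
      fix m n a b assume mn: "m \<noteq> n" and ab: "a \<in> C" "b \<in> C" "v m + a = v n + b"
      hence "b + (1 / (real n + 1) - 1 / (real m + 1)) *\<^sub>R u = a"
        by (simp add: v_def algebra_simps)
      hence "1 / (real n + 1) = 1 / (real m + 1)"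
        using once[OF ab(2)] ab(1) by fastforce
      with mn show False by simp
    qed
    moreover have "bounded (range v)"
      by (rule boundedI[of _ "norm u"]) (auto simp: v_def field_simps)
    ultimately have "emeasure lborel (C \<inter> cball 0 R) = 0"
      using C by (intro emeasure_lborel_eq_0_if_disjoint_translates) (auto intro: borel_closed)
    thus ?thesis
      using C by (auto simp: null_sets_def intro: borel_closed)
  qed
  moreover have "C = (\<Union>R::nat. C \<inter> cball 0 (real R))"
    by (auto simp: real_arch_simple)
  ultimately show ?thesis
    by (metis null_sets_UN)
qed

lemma power2_norm_add:
  "(norm (a + b))\<^sup>2 = (norm a)\<^sup>2 + 2 * inner a b + (norm (b::'a::real_inner))\<^sup>2"
  unfolding power2_norm_eq_inner by (simp add: inner_add_left inner_add_right inner_commute)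

lemma power2_norm_convex_comb:
  "(norm ((1 - t) *\<^sub>R a + t *\<^sub>R b :: 'a::real_inner))\<^sup>2
     = (1 - t) * (norm a)\<^sup>2 + t * (norm b)\<^sup>2 - t * (1 - t) * (norm (b - a))\<^sup>2"
  unfolding power2_norm_eq_inner
  by (simp add: inner_add_left inner_add_right inner_diff_left inner_diff_right inner_commute
      algebra_simps power2_eq_square)

lemma inner_diff_diff_eq_norms:
  "inner (b - a) (d - c :: 'a::real_inner)
     = ((norm (a - d))\<^sup>2 + (norm (b - c))\<^sup>2 - (norm (a - c))\<^sup>2 - (norm (b - d))\<^sup>2) / 2"
  unfolding power2_norm_eq_inner
  by (simp add: inner_diff_left inner_diff_right inner_commute algebra_simps)

lemma power2_inner_le: "(inner x y)\<^sup>2 \<le> (norm x)\<^sup>2 * (norm (y::'a::real_inner))\<^sup>2"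
  using Cauchy_Schwarz_ineq[of x y] by (simp add: power2_norm_eq_inner)

lemma power2_sum3_le: "(p + q + r)\<^sup>2 \<le> 3 * (p\<^sup>2 + q\<^sup>2 + (r::real)\<^sup>2)"
proof -
  have "0 \<le> (p - q)\<^sup>2 + (q - r)\<^sup>2 + (p - r)\<^sup>2" by simp
  thus ?thesis by (simp add: power2_eq_square algebra_simps)
qed

lemma power2_norm_axis: "(norm (axis i x))\<^sup>2 = (norm (x::'a::real_inner))\<^sup>2"
  by (simp add: power2_norm_eq_inner inner_axis_axis)

lemma power2_norm_axis_add_axis:
  "i \<noteq> j \<Longrightarrow> (norm (axis i x + axis j y))\<^sup>2 = (norm x)\<^sup>2 + (norm (y::'a::real_inner))\<^sup>2"
  by (simp add: power2_norm_add power2_norm_axis inner_axis_axis)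

lemma sum_axis_nth: "(\<Sum>i\<in>UNIV. axis k x $ i) = (x::'a::comm_monoid_add)"
  by (simp add: axis_def)

lemma sum_update_one:
  assumes "finite A" "b \<in> A" "\<And>k. k \<in> A \<Longrightarrow> k \<noteq> b \<Longrightarrow> g k = f k"
  shows "sum g A = sum f A - f b + (g b :: 'a::ab_group_add)"
proof -
  have "sum g A = g b + sum g (A - {b})" using sum.remove[OF assms(1,2)] .
  also have "sum g (A - {b}) = sum f (A - {b})" using assms(3) by (intro sum.cong) auto
  also have "\<dots> = sum f A - f b" using sum.remove[OF assms(1,2), of f] by simp
  finally show ?thesis by simp
qed

lemma power2_norm_diff_le: "(norm (a - b))\<^sup>2 \<le> 2 * (norm a)\<^sup>2 + 2 * (norm (b::'a::real_inner))\<^sup>2"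
proof -
  have "(norm (a - b))\<^sup>2 + (norm (a + b))\<^sup>2 = 2 * (norm a)\<^sup>2 + 2 * (norm b)\<^sup>2"
    unfolding power2_norm_eq_inner
    by (simp only: inner_add_left inner_add_right inner_diff_left inner_diff_right inner_commute)
  thus ?thesis using zero_le_power2[of "norm (a + b)"] by linarith
qed

lemma power2_norm_diff_proj:
  fixes u y :: "'a::real_inner"
  assumes "u \<noteq> 0"
  shows "(norm (y - (inner u y / (norm u)\<^sup>2) *\<^sub>R u))\<^sup>2 = (norm y)\<^sup>2 - (inner u y)\<^sup>2 / (norm u)\<^sup>2"
proof -
  have "inner u u = (norm u)\<^sup>2" "inner y y = (norm y)\<^sup>2" "inner y u = inner u y"
    by (simp_all add: power2_norm_eq_inner inner_commute)
  thus ?thesis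
    unfolding power2_norm_eq_inner[of "y - _"] using assms
    by (simp add: inner_diff_left inner_diff_right field_simps power2_eq_square)
qed

lemma power2_norm_diff_proj_le:
  fixes u e :: "'a::real_inner"
  shows "c\<^sup>2 * (norm (u - (inner u e / inner e e) *\<^sub>R e))\<^sup>2 \<le> (norm (c *\<^sub>R u - a *\<^sub>R e))\<^sup>2"
proof (cases "e = 0")
  case True
  thus ?thesis by (simp add: power_mult_distrib)
next
  case False
  define p q r where "p = inner u u" and "q = inner u e" and "r = inner e e"
  have r: "r > 0" using False by (simp add: r_def)
  have lhs: "(norm (u - (inner u e / inner e e) *\<^sub>R e))\<^sup>2 = p - q\<^sup>2 / r"
    unfolding power2_norm_eq_inner p_def q_def r_def using r[unfolded r_def]
    by (simp add: inner_diff_left inner_diff_right inner_commute field_simps power2_eq_square)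
  have rhs: "(norm (c *\<^sub>R u - a *\<^sub>R e))\<^sup>2 = c\<^sup>2 * p - 2 * a * c * q + a\<^sup>2 * r"
    unfolding power2_norm_eq_inner p_def q_def r_def
    by (simp add: inner_diff_left inner_diff_right inner_commute algebra_simps power2_eq_square)
  have "(c\<^sup>2 * p - 2 * a * c * q + a\<^sup>2 * r) - c\<^sup>2 * (p - q\<^sup>2 / r) = (a * r - c * q)\<^sup>2 / r"
    using r by (simp add: field_simps power2_eq_square)
  moreover have "(a * r - c * q)\<^sup>2 / r \<ge> 0" using r by simp
  ultimately show ?thesis unfolding lhs rhs by linarith
qed

lemma power2_norm_diff_le_of_monotone:
  fixes x d z :: "'a::real_inner"
  assumes "0 \<le> c" and "c \<le> inner x d - (norm d)\<^sup>2" and "inner (x - d) z = 0"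
  shows "(norm (d - z))\<^sup>2 + 2 * c \<le> (norm (x - z))\<^sup>2"
proof -
  have "inner x d - (norm d)\<^sup>2 = inner (d - z) (x - d)"
    using assms(3) by (simp add: inner_diff_left inner_diff_right power2_norm_eq_inner inner_commute)
  moreover have "(norm (x - z))\<^sup>2 = (norm (d - z))\<^sup>2 + 2 * inner (d - z) (x - d) + (norm (x - d))\<^sup>2"
    using power2_norm_add[of "d - z" "x - d"] by simp
  ultimately show ?thesis
    using assms(1,2) zero_le_power2[of "norm (x - d)"] by linarith
qed

text \<open>Used with y and d the differences of two responses and of their fits, e = 1, f the
  fit difference without intercept and N the squared distance of the parameters.\<close>

lemma inner_sq_dist_line_le:
  fixes u y d f e :: "'a::real_inner"
  assumes eps: "eps > 0" and B: "B \<ge> 0" and N: "N \<ge> 0"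
    and mono: "(norm d)\<^sup>2 + eps * N \<le> inner y d"
    and f: "(norm f)\<^sup>2 \<le> B * N"
    and d: "d = a *\<^sub>R e + f"
    and u: "inner u y = inner u d" "u \<noteq> 0"
  shows "(inner u y)\<^sup>2 * (norm (u - (inner u e / inner e e) *\<^sub>R e))\<^sup>2
     \<le> ((norm u)\<^sup>2)\<^sup>2 * (B / eps + 2) * ((norm y)\<^sup>2 - (inner u y)\<^sup>2 / (norm u)\<^sup>2)"
proof -
  define t U \<kappa> where "t = inner u y" and "U = (norm u)\<^sup>2"
    and "\<kappa> = (norm (u - (inner u e / inner e e) *\<^sub>R e))\<^sup>2"
  define z where "z = (t / U) *\<^sub>R u"
  have U: "U > 0" using u(2) by (simp add: U_def)
  have "(norm (d - z))\<^sup>2 + 2 * (eps * N) \<le> (norm (y - z))\<^sup>2"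
    using mono u(1) eps N
    by (intro power2_norm_diff_le_of_monotone) (auto simp: z_def inner_diff_left inner_diff_right inner_commute)
  moreover have "0 \<le> eps * N" "0 \<le> (norm (d - z))\<^sup>2" using eps N by simp_all
  ultimately have dz: "(norm (d - z))\<^sup>2 \<le> (norm (y - z))\<^sup>2"
    and "2 * eps * N \<le> (norm (y - z))\<^sup>2"
    by linarith+
  hence N_le: "N \<le> (norm (y - z))\<^sup>2 / (2 * eps)"
    using eps by (simp add: field_simps)
  have f_le: "(norm f)\<^sup>2 \<le> B / eps * (norm (y - z))\<^sup>2 / 2"
    using f mult_left_mono[OF N_le B] by (simp add: field_simps)
  have "(t / U)\<^sup>2 * \<kappa> \<le> (norm (f - (d - z)))\<^sup>2"
    using power2_norm_diff_proj_le[of "t / U" u e a] by (simp add: \<kappa>_def d z_def algebra_simps)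
  also have "\<dots> \<le> 2 * (norm f)\<^sup>2 + 2 * (norm (d - z))\<^sup>2"
    by (rule power2_norm_diff_le)
  also have "\<dots> \<le> 2 * (B / eps * (norm (y - z))\<^sup>2 / 2) + 2 * (norm (y - z))\<^sup>2"
    using f_le dz by linarith
  also have "\<dots> = (B / eps + 2) * (norm (y - z))\<^sup>2"
    by (simp add: algebra_simps)
  also have "(norm (y - z))\<^sup>2 = (norm y)\<^sup>2 - t\<^sup>2 / U"
    unfolding z_def t_def U_def using u(2) by (rule power2_norm_diff_proj)
  finally have "U\<^sup>2 * ((t / U)\<^sup>2 * \<kappa>) \<le> U\<^sup>2 * ((B / eps + 2) * ((norm y)\<^sup>2 - t\<^sup>2 / U))"
    by (intro mult_left_mono) auto
  moreover have "U\<^sup>2 * ((t / U)\<^sup>2 * \<kappa>) = t\<^sup>2 * \<kappa>"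
    using U by (simp add: field_simps power2_eq_square)
  ultimately show ?thesis
    unfolding t_def[symmetric] U_def[symmetric] \<kappa>_def[symmetric] by (simp add: mult.assoc)
qed

lemma le_of_convex_gap:
  fixes x z q :: real
  assumes gap: "\<And>t. 0 < t \<Longrightarrow> t < 1 \<Longrightarrow> x \<le> (1 - t) * x + t * z - t * (1 - t) * q"
  shows "x + q \<le> z"
proof -
  have "\<forall>\<^sub>F t in at_right 0. (1 - t) * q \<le> z - x"
  proof (rule eventually_at_rightI[of 0 1])
    fix t :: real assume "t \<in> {0<..<1}"
    hence "0 < t" "t < 1" by auto
    with gap[OF this] have "t * ((1 - t) * q) \<le> t * (z - x)"
      by (simp add: algebra_simps)
    with \<open>0 < t\<close> show "(1 - t) * q \<le> z - x" by simp
  qed simp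
  moreover have "((\<lambda>t. (1 - t) * q) \<longlongrightarrow> (1 - 0) * q) (at_right 0)"
    by (intro tendsto_intros)
  ultimately have "(1 - 0) * q \<le> z - x"
    by (intro tendsto_upperbound) auto
  thus ?thesis by simp
qed

lemma nonpos_if_linear_le_quadratic:
  fixes h c t :: real
  assumes t: "0 < t" and le: "\<And>d. 0 < d \<Longrightarrow> d \<le> t \<Longrightarrow> d * h \<le> c * d\<^sup>2"
  shows "h \<le> 0"
proof -
  have "\<forall>\<^sub>F d in at_right 0. h \<le> c * d"
  proof (rule eventually_at_rightI[of 0 t])
    fix d :: real assume "d \<in> {0<..<t}"
    hence d: "0 < d" "d \<le> t" by auto
    from le[OF d] have "d * h \<le> d * (c * d)"
      by (simp add: power2_eq_square algebra_simps)
    with d(1) show "h \<le> c * d" by simp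
  qed (use t in simp)
  moreover have "((\<lambda>d. c * d) \<longlongrightarrow> c * 0) (at_right 0)"
    by (intro tendsto_intros)
  ultimately have "h \<le> c * 0"
    by (intro tendsto_lowerbound[where F = "at_right (0::real)"]) auto
  thus ?thesis by simp
qed

section \<open>The objective as a strongly convex function\<close>

definition outer_sq :: "real^'p \<Rightarrow> real^'p^'p" where
  "outer_sq x = (\<chi> a b. x$a * x$b)"

definition whl_fit :: "real^'p^'n \<Rightarrow> real \<Rightarrow> real^'p \<Rightarrow> real^'p \<Rightarrow> real^'p^'p \<Rightarrow> real^'n" where
  "whl_fit X b0 bp bm Th = (\<chi> i. b0 + X$i \<bullet> (bp - bm) + (1/2) * (Th \<bullet> outer_sq (X$i)))"

definition whl_penalty :: "real \<Rightarrow> real^'p \<Rightarrow> real^'p \<Rightarrow> real^'p^'p \<Rightarrow> real" where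
  "whl_penalty lam bp bm Th = lam * (sum (($) bp) UNIV + sum (($) bm) UNIV) + (lam/2) * Theta_l1 Th"

definition sq_norms :: "real^'p \<Rightarrow> real^'p \<Rightarrow> real^'p^'p \<Rightarrow> real" where
  "sq_norms bp bm Th = (norm Th)\<^sup>2 + (norm bp)\<^sup>2 + (norm bm)\<^sup>2"

lemma whl_fit_nth [simp]:
  "whl_fit X b0 bp bm Th $ i = b0 + X$i \<bullet> (bp - bm) + (1/2) * (Th \<bullet> outer_sq (X$i))"
  by (simp add: whl_fit_def)

lemma inner_mult_vec_eq_inner_outer_sq: "x \<bullet> (Th *v x) = Th \<bullet> outer_sq x"
  unfolding inner_vec_def matrix_vector_mult_def outer_sq_def
  by (simp add: sum_distrib_left mult.assoc mult.left_commute)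

lemma power2_norm_vec: "(norm (v::real^'n))\<^sup>2 = (\<Sum>i\<in>UNIV. (v$i)\<^sup>2)"
  unfolding power2_norm_eq_inner inner_vec_def by (simp add: power2_eq_square)

lemma frob_sq_eq_power2_norm: "frob_sq Th = (norm Th)\<^sup>2"
  unfolding frob_sq_def power2_norm_eq_inner inner_vec_def by (simp add: power2_eq_square)

lemma whl_objective_eq:
  "whl_objective X lam eps y b0 bp bm Th
     = (norm (y - whl_fit X b0 bp bm Th))\<^sup>2 / 2 + eps / 2 * sq_norms bp bm Th + whl_penalty lam bp bm Th"
  unfolding whl_objective_def whl_loss_def whl_penalty_def sq_norms_def power2_norm_vec[of "y - _"]
  by (simp add: frob_sq_eq_power2_norm inner_mult_vec_eq_inner_outer_sq sum.distrib algebra_simps)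

lemma whl_fit_diff:
  "whl_fit X c0 cp cm cT - whl_fit X a0 ap am aT = whl_fit X (c0 - a0) (cp - ap) (cm - am) (cT - aT)"
  by (simp add: vec_eq_iff inner_diff_left inner_diff_right algebra_simps)

lemma whl_fit_intercept: "whl_fit X b0 bp bm Th = b0 *\<^sub>R 1 + whl_fit X 0 bp bm Th"
  by (simp add: vec_eq_iff)

lemma whl_fit_convex_comb:
  "whl_fit X ((1 - t) * a0 + t * c0) ((1 - t) *\<^sub>R ap + t *\<^sub>R cp) ((1 - t) *\<^sub>R am + t *\<^sub>R cm)
     ((1 - t) *\<^sub>R aT + t *\<^sub>R cT) = (1 - t) *\<^sub>R whl_fit X a0 ap am aT + t *\<^sub>R whl_fit X c0 cp cm cT"
  by (simp add: vec_eq_iff inner_diff_right inner_add_right inner_add_left algebra_simps)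

lemma sq_norms_nonneg: "0 \<le> sq_norms bp bm Th"
  by (simp add: sq_norms_def)

lemma sq_norms_add:
  "sq_norms (bp + dp) (bm + dm) (Th + dT)
     = sq_norms bp bm Th + 2 * (bp \<bullet> dp + bm \<bullet> dm + Th \<bullet> dT) + sq_norms dp dm dT"
  unfolding sq_norms_def power2_norm_add by (simp add: algebra_simps)

lemma sq_norms_minus_commute: "sq_norms (a - b) (c - d) (e - f) = sq_norms (b - a) (d - c) (f - e)"
  by (simp add: sq_norms_def norm_minus_commute)

lemma sq_norms_convex_comb:
  "sq_norms ((1 - t) *\<^sub>R ap + t *\<^sub>R cp) ((1 - t) *\<^sub>R am + t *\<^sub>R cm) ((1 - t) *\<^sub>R aT + t *\<^sub>R cT)
     = (1 - t) * sq_norms ap am aT + t * sq_norms cp cm cT - t * (1 - t) * sq_norms (cp - ap) (cm - am) (cT - aT)"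
  unfolding sq_norms_def power2_norm_convex_comb by (simp add: algebra_simps)

lemma abs_le_row_l1: "\<bar>v$b\<bar> \<le> row_l1 v"
  unfolding row_l1_def by (rule member_le_sum) auto

lemma row_l1_mono: "(\<And>c. \<bar>v$c\<bar> \<le> \<bar>w$c\<bar>) \<Longrightarrow> row_l1 v \<le> row_l1 w"
  unfolding row_l1_def by (rule sum_mono) auto

lemma row_l1_add_axis: "row_l1 (v + axis b s) = row_l1 v - \<bar>v$b\<bar> + \<bar>v$b + s\<bar>"
  unfolding row_l1_def by (subst sum_update_one[where b = b]) (auto simp: axis_def)

lemma Theta_l1_eq_sum_row_l1: "Theta_l1 Th = (\<Sum>j\<in>UNIV. row_l1 (Th$j) - \<bar>Th$j$j\<bar>)"
  unfolding Theta_l1_def row_l1_def by (simp add: sum_diff1)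

lemma Theta_l1_add_axis_axis:
  assumes "a \<noteq> b"
  shows "Theta_l1 (Th + axis a (axis b s)) = Theta_l1 Th - \<bar>Th$a$b\<bar> + \<bar>Th$a$b + s\<bar>"
proof -
  have "Theta_l1 (Th + axis a (axis b s))
      = Theta_l1 Th - (row_l1 (Th$a) - \<bar>Th$a$a\<bar>) + (row_l1 (Th$a + axis b s) - \<bar>Th$a$a\<bar>)"
    unfolding Theta_l1_eq_sum_row_l1 using assms
    by (subst sum_update_one[where b = a]) (auto simp: axis_def)
  thus ?thesis
    by (simp add: row_l1_add_axis)
qed

lemma abs_convex_comb_le:
  fixes a b t :: real
  assumes "0 \<le> t" "t \<le> 1"
  shows "\<bar>(1 - t) * a + t * b\<bar> \<le> (1 - t) * \<bar>a\<bar> + t * \<bar>b\<bar>"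
  using abs_triangle_ineq[of "(1 - t) * a" "t * b"] assms by (simp add: abs_mult)

lemma row_l1_convex_comb:
  "0 \<le> t \<Longrightarrow> t \<le> 1 \<Longrightarrow> row_l1 ((1 - t) *\<^sub>R a + t *\<^sub>R b) \<le> (1 - t) * row_l1 a + t * row_l1 b"
  unfolding row_l1_def by (simp add: sum_distrib_left sum.distrib[symmetric] sum_mono abs_convex_comb_le)

lemma Theta_l1_convex_comb:
  "0 \<le> t \<Longrightarrow> t \<le> 1 \<Longrightarrow> Theta_l1 ((1 - t) *\<^sub>R a + t *\<^sub>R b) \<le> (1 - t) * Theta_l1 a + t * Theta_l1 b"
  unfolding Theta_l1_def by (simp add: sum_distrib_left sum.distrib[symmetric] sum_mono abs_convex_comb_le)

lemma whl_penalty_convex_comb: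
  assumes "0 \<le> t" "t \<le> 1" "0 \<le> lam"
  shows "whl_penalty lam ((1 - t) *\<^sub>R ap + t *\<^sub>R cp) ((1 - t) *\<^sub>R am + t *\<^sub>R cm) ((1 - t) *\<^sub>R aT + t *\<^sub>R cT)
     \<le> (1 - t) * whl_penalty lam ap am aT + t * whl_penalty lam cp cm cT"
proof -
  have "lam / 2 * Theta_l1 ((1 - t) *\<^sub>R aT + t *\<^sub>R cT) \<le> lam / 2 * ((1 - t) * Theta_l1 aT + t * Theta_l1 cT)"
    using Theta_l1_convex_comb[OF assms(1,2)] assms(3) by (intro mult_left_mono) auto
  moreover have sum_comb: "sum (($) ((1 - t) *\<^sub>R a + t *\<^sub>R c)) UNIV
      = (1 - t) * sum (($) a) UNIV + t * sum (($) c) UNIV" for a c :: "real^'p"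
    by (simp add: sum.distrib sum_distrib_left)
  moreover have "(1 - t) * whl_penalty lam ap am aT + t * whl_penalty lam cp cm cT
    = lam * (((1 - t) * sum (($) ap) UNIV + t * sum (($) cp) UNIV) + ((1 - t) * sum (($) am) UNIV + t * sum (($) cm) UNIV))
      + lam / 2 * ((1 - t) * Theta_l1 aT + t * Theta_l1 cT)"
    unfolding whl_penalty_def by (simp add: field_simps)
  ultimately show ?thesis
    unfolding whl_penalty_def sum_comb by linarith
qed

lemma whl_feasible_convex_comb:
  assumes t: "0 \<le> t" "t \<le> 1" and a: "whl_feasible ap am aT" and c: "whl_feasible cp cm cT"
  shows "whl_feasible ((1 - t) *\<^sub>R ap + t *\<^sub>R cp) ((1 - t) *\<^sub>R am + t *\<^sub>R cm) ((1 - t) *\<^sub>R aT + t *\<^sub>R cT)"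
  unfolding whl_feasible_def
proof (intro conjI allI)
  fix j
  have "row_l1 (((1 - t) *\<^sub>R aT + t *\<^sub>R cT) $ j) \<le> (1 - t) * row_l1 (aT$j) + t * row_l1 (cT$j)"
    using row_l1_convex_comb[OF t, of "aT$j" "cT$j"] by simp
  also have "\<dots> \<le> (1 - t) * (ap$j + am$j) + t * (cp$j + cm$j)"
    using a c t by (intro add_mono mult_left_mono) (auto simp: whl_feasible_def)
  finally show "row_l1 (((1 - t) *\<^sub>R aT + t *\<^sub>R cT) $ j)
      \<le> ((1 - t) *\<^sub>R ap + t *\<^sub>R cp) $ j + ((1 - t) *\<^sub>R am + t *\<^sub>R cm) $ j"
    by (simp add: algebra_simps)
qed (use a c t in \<open>auto simp: whl_feasible_def\<close>)

lemma whl_objective_convex_comb: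
  assumes t: "0 \<le> t" "t \<le> 1" and lam: "0 \<le> lam"
  shows "whl_objective X lam eps y ((1 - t) * a0 + t * c0) ((1 - t) *\<^sub>R ap + t *\<^sub>R cp)
      ((1 - t) *\<^sub>R am + t *\<^sub>R cm) ((1 - t) *\<^sub>R aT + t *\<^sub>R cT)
    \<le> (1 - t) * whl_objective X lam eps y a0 ap am aT + t * whl_objective X lam eps y c0 cp cm cT
      - t * (1 - t) * ((norm (whl_fit X c0 cp cm cT - whl_fit X a0 ap am aT))\<^sup>2
          + eps * sq_norms (cp - ap) (cm - am) (cT - aT)) / 2"
proof -
  define ra rc where "ra = y - whl_fit X a0 ap am aT" and "rc = y - whl_fit X c0 cp cm cT"
  define D where "D = (norm (whl_fit X c0 cp cm cT - whl_fit X a0 ap am aT))\<^sup>2"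
  have "(norm (y - whl_fit X ((1 - t) * a0 + t * c0) ((1 - t) *\<^sub>R ap + t *\<^sub>R cp)
      ((1 - t) *\<^sub>R am + t *\<^sub>R cm) ((1 - t) *\<^sub>R aT + t *\<^sub>R cT)))\<^sup>2
    = (norm ((1 - t) *\<^sub>R ra + t *\<^sub>R rc))\<^sup>2"
    unfolding whl_fit_convex_comb ra_def rc_def by (simp add: algebra_simps)
  also have "\<dots> = (1 - t) * (norm ra)\<^sup>2 + t * (norm rc)\<^sup>2 - t * (1 - t) * D"
    unfolding power2_norm_convex_comb by (simp add: D_def ra_def rc_def norm_minus_commute)
  finally show ?thesis
    using whl_penalty_convex_comb[OF t lam, of ap cp am cm aT cT]
    unfolding whl_objective_eq sq_norms_convex_comb D_def[symmetric] ra_def[symmetric] rc_def[symmetric]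
    by (simp add: field_simps)
qed

lemma whl_solution_three_point:
  assumes lam: "0 \<le> lam" and sol: "whl_solution X lam eps y a0 ap am aT"
    and c: "whl_feasible cp cm cT"
  shows "whl_objective X lam eps y a0 ap am aT
      + ((norm (whl_fit X c0 cp cm cT - whl_fit X a0 ap am aT))\<^sup>2
          + eps * sq_norms (cp - ap) (cm - am) (cT - aT)) / 2
    \<le> whl_objective X lam eps y c0 cp cm cT"
proof (rule le_of_convex_gap)
  fix t :: real assume "0 < t" "t < 1"
  hence t: "0 \<le> t" "t \<le> 1" by simp_all
  have "whl_feasible ap am aT" using sol by (simp add: whl_solution_def)
  hence "whl_objective X lam eps y a0 ap am aT \<le> whl_objective X lam eps y ((1 - t) * a0 + t * c0)
      ((1 - t) *\<^sub>R ap + t *\<^sub>R cp) ((1 - t) *\<^sub>R am + t *\<^sub>R cm) ((1 - t) *\<^sub>R aT + t *\<^sub>R cT)"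
    using sol whl_feasible_convex_comb[OF t _ c] by (simp add: whl_solution_def)
  also note whl_objective_convex_comb[OF t lam]
  finally show "whl_objective X lam eps y a0 ap am aT
      \<le> (1 - t) * whl_objective X lam eps y a0 ap am aT + t * whl_objective X lam eps y c0 cp cm cT
        - t * (1 - t) * (((norm (whl_fit X c0 cp cm cT - whl_fit X a0 ap am aT))\<^sup>2
          + eps * sq_norms (cp - ap) (cm - am) (cT - aT)) / 2)"
    by simp
qed

lemma whl_solution_monotone:
  assumes lam: "0 \<le> lam"
    and s1: "whl_solution X lam eps y1 a0 ap am aT"
    and s2: "whl_solution X lam eps y2 c0 cp cm cT"
  shows "(norm (whl_fit X c0 cp cm cT - whl_fit X a0 ap am aT))\<^sup>2
      + eps * sq_norms (cp - ap) (cm - am) (cT - aT)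
    \<le> inner (y2 - y1) (whl_fit X c0 cp cm cT - whl_fit X a0 ap am aT)"
proof -
  define f1 f2 where "f1 = whl_fit X a0 ap am aT" and "f2 = whl_fit X c0 cp cm cT"
  have "whl_feasible ap am aT" "whl_feasible cp cm cT"
    using s1 s2 by (simp_all add: whl_solution_def)
  from whl_solution_three_point[OF lam s1 this(2), of c0] whl_solution_three_point[OF lam s2 this(1), of a0]
  have "(norm (f2 - f1))\<^sup>2 + eps * sq_norms (cp - ap) (cm - am) (cT - aT)
      \<le> ((norm (y1 - f2))\<^sup>2 + (norm (y2 - f1))\<^sup>2 - (norm (y1 - f1))\<^sup>2 - (norm (y2 - f2))\<^sup>2) / 2"
    unfolding whl_objective_eq f1_def[symmetric] f2_def[symmetric]
    by (simp add: norm_minus_commute[of f1] sq_norms_minus_commute[of ap cp] field_simps)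
  thus ?thesis
    unfolding inner_diff_diff_eq_norms f1_def f2_def .
qed

section \<open>The exceptional null sets\<close>

definition whl_fit_bound :: "real^'p^'n \<Rightarrow> real" where
  "whl_fit_bound X = (\<Sum>i\<in>UNIV. 3 * ((norm (X$i))\<^sup>2 + (norm (outer_sq (X$i)))\<^sup>2))"

lemma whl_fit_bound_nonneg: "0 \<le> whl_fit_bound X"
  unfolding whl_fit_bound_def by (intro sum_nonneg) simp

lemma power2_norm_whl_fit_le: "(norm (whl_fit X 0 bp bm Th))\<^sup>2 \<le> whl_fit_bound X * sq_norms bp bm Th"
proof -
  have "(whl_fit X 0 bp bm Th $ i)\<^sup>2 \<le> 3 * ((norm (X$i))\<^sup>2 + (norm (outer_sq (X$i)))\<^sup>2) * sq_norms bp bm Th"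
    for i
  proof -
    define a b where "a = (norm (X$i))\<^sup>2" and "b = (norm (outer_sq (X$i)))\<^sup>2"
    have "(whl_fit X 0 bp bm Th $ i)\<^sup>2 = (X$i \<bullet> bp + - (X$i \<bullet> bm) + (1/2) * (Th \<bullet> outer_sq (X$i)))\<^sup>2"
      by (simp add: inner_diff_right)
    also have "\<dots> \<le> 3 * ((X$i \<bullet> bp)\<^sup>2 + (X$i \<bullet> bm)\<^sup>2 + (1/4) * (Th \<bullet> outer_sq (X$i))\<^sup>2)"
      using power2_sum3_le[of "X$i \<bullet> bp" "- (X$i \<bullet> bm)" "(1/2) * (Th \<bullet> outer_sq (X$i))"]
      by (simp add: power_mult_distrib power2_eq_square)
    also have "\<dots> \<le> 3 * (a * (norm bp)\<^sup>2 + a * (norm bm)\<^sup>2 + (1/4) * (b * (norm Th)\<^sup>2))"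
      using power2_inner_le[of "X$i" bp] power2_inner_le[of "X$i" bm] power2_inner_le[of "outer_sq (X$i)" Th]
      by (simp add: a_def b_def inner_commute[of Th])
    also have "\<dots> \<le> 3 * (a + b) * sq_norms bp bm Th"
    proof -
      have "0 \<le> a" "0 \<le> b" by (simp_all add: a_def b_def)
      thus ?thesis
        by (simp add: sq_norms_def algebra_simps add_increasing mult_nonneg_nonneg)
    qed
    finally show ?thesis by (simp add: a_def b_def)
  qed
  hence "(\<Sum>i\<in>UNIV. (whl_fit X 0 bp bm Th $ i)\<^sup>2)
      \<le> (\<Sum>i\<in>UNIV. 3 * ((norm (X$i))\<^sup>2 + (norm (outer_sq (X$i)))\<^sup>2) * sq_norms bp bm Th)"
    by (intro sum_mono)
  thus ?thesis
    by (simp add: power2_norm_vec whl_fit_bound_def sum_distrib_right)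
qed

definition whl_orth_set :: "real^'p^'n \<Rightarrow> real \<Rightarrow> real \<Rightarrow> 'p \<Rightarrow> (real^'n) set" where
  "whl_orth_set X lam eps m = {y. \<exists>b0 bp bm Th. whl_solution X lam eps y b0 bp bm Th
      \<and> column m X \<bullet> (y - whl_fit X b0 bp bm Th) = 0}"

definition whl_orth_gap :: "real^'p^'n \<Rightarrow> real \<Rightarrow> 'p \<Rightarrow> real^'n \<Rightarrow> real" where
  "whl_orth_gap X eps m z =
     ((norm (column m X))\<^sup>2)\<^sup>2 * (whl_fit_bound X / eps + 2)
       * ((norm z)\<^sup>2 - (column m X \<bullet> z)\<^sup>2 / (norm (column m X))\<^sup>2)
     - (column m X \<bullet> z)\<^sup>2 * (norm (column m X - (column m X \<bullet> 1 / ((1::real^'n) \<bullet> 1)) *\<^sub>R 1))\<^sup>2"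

lemma nonconstant_column:
  fixes X :: "real^'p^'n"
  assumes "\<not> (\<exists>c. \<forall>i. X$i$m = c)"
  shows "column m X \<noteq> 0" and "column m X - (column m X \<bullet> 1 / ((1::real^'n) \<bullet> 1)) *\<^sub>R 1 \<noteq> 0"
  using assms by (auto simp: vec_eq_iff column_def)

lemma whl_orth_gap_nonneg:
  fixes X :: "real^'p^'n"
  assumes lam: "0 \<le> lam" and eps: "0 < eps" and m: "\<not> (\<exists>c. \<forall>i. X$i$m = c)"
    and y1: "y1 \<in> whl_orth_set X lam eps m" and y2: "y2 \<in> whl_orth_set X lam eps m"
  shows "0 \<le> whl_orth_gap X eps m (y2 - y1)"
proof -
  obtain a0 ap am aT where s1: "whl_solution X lam eps y1 a0 ap am aT"
    and o1: "column m X \<bullet> (y1 - whl_fit X a0 ap am aT) = 0"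
    using y1 by (auto simp: whl_orth_set_def)
  obtain c0 cp cm cT where s2: "whl_solution X lam eps y2 c0 cp cm cT"
    and o2: "column m X \<bullet> (y2 - whl_fit X c0 cp cm cT) = 0"
    using y2 by (auto simp: whl_orth_set_def)
  have "whl_fit X c0 cp cm cT - whl_fit X a0 ap am aT
      = (c0 - a0) *\<^sub>R 1 + whl_fit X 0 (cp - ap) (cm - am) (cT - aT)"
    unfolding whl_fit_diff by (rule whl_fit_intercept)
  moreover have "column m X \<bullet> (y2 - y1) = column m X \<bullet> (whl_fit X c0 cp cm cT - whl_fit X a0 ap am aT)"
    using o1 o2 by (simp add: inner_diff_right)
  ultimately show ?thesis
    unfolding whl_orth_gap_def
    using inner_sq_dist_line_le[OF eps whl_fit_bound_nonneg sq_norms_nonneg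
        whl_solution_monotone[OF lam s1 s2] power2_norm_whl_fit_le] nonconstant_column(1)[OF m]
    by simp
qed

text \<open>By continuity the gap stays nonnegative on differences of points of the closure, whereas
  it is negative at every nonzero multiple of a nonconstant column.\<close>

lemma null_sets_closure_whl_orth_set:
  fixes X :: "real^'p^'n"
  assumes lam: "0 \<le> lam" and eps: "0 < eps" and m: "\<not> (\<exists>c. \<forall>i. X$i$m = c)"
  shows "closure (whl_orth_set X lam eps m) \<in> null_sets lborel"
proof (rule null_sets_lborel_if_closed_meets_lines_once[OF closed_closure nonconstant_column(1)[OF m]])
  let ?Z = "whl_orth_set X lam eps m" and ?u = "column m X"
  fix y s assume ys: "y \<in> closure ?Z" "y + s *\<^sub>R ?u \<in> closure ?Z"
  have "0 \<le> whl_orth_gap X eps m (snd p - fst p)" if "p \<in> closure (?Z \<times> ?Z)" for p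
  proof (rule continuous_ge_on_closure[OF _ that])
    show "continuous_on (closure (?Z \<times> ?Z)) (\<lambda>p. whl_orth_gap X eps m (snd p - fst p))"
      unfolding whl_orth_gap_def using nonconstant_column(1)[OF m] by (intro continuous_intros) auto
  qed (use whl_orth_gap_nonneg[OF lam eps m] in auto)
  from this[of "(y, y + s *\<^sub>R ?u)"] ys
  have "0 \<le> whl_orth_gap X eps m (s *\<^sub>R ?u)"
    by (simp add: closure_Times)
  moreover define U \<kappa> where "U = (norm ?u)\<^sup>2"
    and "\<kappa> = (norm (?u - (?u \<bullet> 1 / ((1::real^'n) \<bullet> 1)) *\<^sub>R 1))\<^sup>2"
  moreover have "U > 0" and "\<kappa> > 0"
    using nonconstant_column[OF m] by (simp_all add: U_def \<kappa>_def)
  moreover have ui: "?u \<bullet> (s *\<^sub>R ?u) = s * U" and un: "(norm (s *\<^sub>R ?u))\<^sup>2 = s\<^sup>2 * U"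
    by (simp_all add: U_def power2_norm_eq_inner power_mult_distrib)
  ultimately have "0 \<le> U\<^sup>2 * (whl_fit_bound X / eps + 2) * (s\<^sup>2 * U - (s * U)\<^sup>2 / U) - (s * U)\<^sup>2 * \<kappa>"
    unfolding whl_orth_gap_def U_def[symmetric] \<kappa>_def[symmetric] ui un by blast
  hence "0 \<le> - (s * U)\<^sup>2 * \<kappa>"
    using \<open>U > 0\<close> by (simp add: power2_eq_square)
  with \<open>U > 0\<close> \<open>\<kappa> > 0\<close> show "s = 0"
    by (simp add: mult_le_0_iff)
qed

section \<open>Perturbations of a solution\<close>

lemma whl_solution_perturbation_le:
  assumes sol: "whl_solution X lam eps y b0 bp bm Th"
    and feas: "whl_feasible (bp + dp) (bm + dm) (Th + dT)"
    and fit: "whl_fit X b0' (bp + dp) (bm + dm) (Th + dT) = whl_fit X b0 bp bm Th + w"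
  shows "(y - whl_fit X b0 bp bm Th) \<bullet> w
    \<le> (norm w)\<^sup>2 / 2 + eps * (bp \<bullet> dp + bm \<bullet> dm + Th \<bullet> dT + sq_norms dp dm dT / 2)
      + whl_penalty lam (bp + dp) (bm + dm) (Th + dT) - whl_penalty lam bp bm Th"
proof -
  define r where "r = y - whl_fit X b0 bp bm Th"
  have "whl_objective X lam eps y b0 bp bm Th \<le> whl_objective X lam eps y b0' (bp + dp) (bm + dm) (Th + dT)"
    using sol feas by (simp add: whl_solution_def)
  moreover have "y - whl_fit X b0' (bp + dp) (bm + dm) (Th + dT) = r - w"
    by (simp add: fit r_def)
  moreover have "(norm (r - w))\<^sup>2 = (norm r)\<^sup>2 - 2 * (r \<bullet> w) + (norm w)\<^sup>2"
    using power2_norm_add[of r "- w"] by simp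
  ultimately show ?thesis
    unfolding whl_objective_eq sq_norms_add r_def[symmetric] by (simp add: field_simps)
qed

lemma whl_solution_residual_orth_column:
  assumes eps: "0 < eps" and sol: "whl_solution X lam eps y b0 bp bm Th"
    and eq: "bp$j = bm$j" and pos: "0 < bp$j"
  shows "column j X \<bullet> (y - whl_fit X b0 bp bm Th) = 0"
proof -
  define h where "h = column j X \<bullet> (y - whl_fit X b0 bp bm Th)"
  define c where "c = 2 * (norm (column j X))\<^sup>2 + eps"
  have shift: "d * (2 * h) \<le> c * d\<^sup>2" if d: "\<bar>d\<bar> \<le> bp$j" for d
  proof -
    have feas: "whl_feasible bp bm Th"
      using sol by (simp add: whl_solution_def)
    hence "row_l1 (Th$j) \<le> bp$j + bm$j"
      by (simp add: whl_feasible_def)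
    with feas d eq have "whl_feasible (bp + axis j d) (bm + axis j (- d)) (Th + 0)"
      by (auto simp: whl_feasible_def axis_def)
    moreover have "whl_fit X b0 (bp + axis j d) (bm + axis j (- d)) (Th + 0)
        = whl_fit X b0 bp bm Th + (2 * d) *\<^sub>R column j X"
      by (simp add: vec_eq_iff inner_diff_right inner_add_right inner_axis column_def algebra_simps)
    moreover have "whl_penalty lam (bp + axis j d) (bm + axis j (- d)) (Th + 0) = whl_penalty lam bp bm Th"
      by (simp add: whl_penalty_def sum.distrib axis_def)
    moreover have "bp \<bullet> axis j d + bm \<bullet> axis j (- d) = 0" and "sq_norms (axis j d) (axis j (- d)) 0 = 2 * d\<^sup>2"
      using eq by (simp_all add: inner_axis sq_norms_def power2_norm_axis)
    ultimately have "(y - whl_fit X b0 bp bm Th) \<bullet> ((2 * d) *\<^sub>R column j X)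
        \<le> (norm ((2 * d) *\<^sub>R column j X))\<^sup>2 / 2 + eps * d\<^sup>2"
      using whl_solution_perturbation_le[OF sol, of "axis j d" "axis j (- d)" 0 b0] by simp
    thus ?thesis
      by (simp add: h_def c_def inner_commute power_mult_distrib algebra_simps)
  qed
  have "2 * h \<le> 0"
    using pos by (rule nonpos_if_linear_le_quadratic[where c = c]) (simp add: shift)
  moreover have "- (2 * h) \<le> 0"
    using pos by (rule nonpos_if_linear_le_quadratic[where c = c]) (use shift[of "- _"] in simp)
  ultimately show ?thesis by (simp add: h_def)
qed

lemma whl_feasible_shrink:
  assumes "whl_feasible bp bm Th" and "\<And>r c. \<bar>Th'$r$c\<bar> \<le> \<bar>Th$r$c\<bar>"
  shows "whl_feasible bp bm Th'"
proof -
  have "row_l1 (Th'$r) \<le> row_l1 (Th$r)" for r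
    using assms(2) by (rule row_l1_mono)
  moreover have "\<bar>Th'$r$r\<bar> \<le> 0" for r
    using assms by (metis whl_feasible_def abs_zero)
  ultimately show ?thesis
    using assms(1) unfolding whl_feasible_def by (meson abs_le_zero_iff order_trans)
qed

lemma whl_solution_interaction_eq_0_if_constant_columns:
  assumes lam: "0 < lam" and eps: "0 \<le> eps" and sol: "whl_solution X lam eps y b0 bp bm Th"
    and jk: "j \<noteq> k" and cj: "\<And>i. X$i$j = cj" and ck: "\<And>i. X$i$k = ck"
  shows "Th$j$k = 0"
proof -
  define a b where "a = Th$j$k" and "b = Th$k$j"
  define dT where "dT = axis j (axis k (- a)) + axis k (axis j (- b))"
  have Th'_nth: "(Th + dT)$r$c = (if (r = j \<and> c = k) \<or> (r = k \<and> c = j) then 0 else Th$r$c)" for r c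
    using jk by (auto simp: dT_def axis_def a_def b_def)
  have "whl_feasible bp bm (Th + dT)"
  proof (rule whl_feasible_shrink)
    show "whl_feasible bp bm Th" using sol by (simp add: whl_solution_def)
    show "\<bar>(Th + dT)$r$c\<bar> \<le> \<bar>Th$r$c\<bar>" for r c unfolding Th'_nth by simp
  qed
  hence "whl_feasible (bp + 0) (bm + 0) (Th + dT)" by simp
  moreover have "whl_fit X (b0 + (a + b) / 2 * cj * ck) (bp + 0) (bm + 0) (Th + dT) = whl_fit X b0 bp bm Th + 0"
    \<comment> \<open>the interaction of two constant columns is absorbed by the intercept\<close>
    by (simp add: vec_eq_iff dT_def outer_sq_def inner_add_left inner_axis' cj ck algebra_simps)
  ultimately have "0 \<le> eps * (Th \<bullet> dT + sq_norms 0 0 dT / 2)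
      + whl_penalty lam (bp + 0) (bm + 0) (Th + dT) - whl_penalty lam bp bm Th"
    using whl_solution_perturbation_le[OF sol] by fastforce
  moreover have "Th \<bullet> dT + sq_norms 0 0 dT / 2 = - (a\<^sup>2 + b\<^sup>2) / 2"
  proof -
    have "Th \<bullet> dT = - (a\<^sup>2 + b\<^sup>2)"
      by (simp add: dT_def inner_add_right inner_axis a_def b_def power2_eq_square)
    moreover have "sq_norms 0 0 dT = a\<^sup>2 + b\<^sup>2"
      using jk unfolding dT_def sq_norms_def power2_norm_axis_add_axis[OF jk] power2_norm_axis by simp
    ultimately show ?thesis by simp
  qed
  moreover have "Theta_l1 (Th + dT) = Theta_l1 Th - \<bar>a\<bar> - \<bar>b\<bar>"
  proof -
    have "(Th + axis j (axis k (- a)))$k$j = b"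
      using jk by (simp add: axis_def b_def)
    thus ?thesis
      using Theta_l1_add_axis_axis[OF jk, of Th "- a"] Theta_l1_add_axis_axis[OF jk[symmetric], of "Th + axis j (axis k (- a))" "- b"]
      by (simp add: dT_def add.assoc a_def)
  qed
  ultimately have "lam / 2 * (\<bar>a\<bar> + \<bar>b\<bar>) \<le> - eps * ((a\<^sup>2 + b\<^sup>2) / 2)"
    by (simp add: whl_penalty_def algebra_simps)
  moreover have "0 \<le> eps * ((a\<^sup>2 + b\<^sup>2) / 2)"
    using eps by simp
  ultimately have "lam / 2 * (\<bar>a\<bar> + \<bar>b\<bar>) \<le> 0"
    by linarith
  hence "\<bar>a\<bar> + \<bar>b\<bar> \<le> 0"
    using lam by (simp add: mult_le_0_iff)
  thus ?thesis
    by (simp add: a_def)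
qed

text \<open>Moving the weight of Theta_jk to Theta_kj keeps the interaction term of the fit and the
  l1 norm of Theta; the hierarchy budget d moves from the main effect j to the main effect k, whose
  new coefficient is split between its positive and negative parts in the ratio r : 1 - r.\<close>

definition transfer_beta :: "'p \<Rightarrow> 'p \<Rightarrow> real \<Rightarrow> real \<Rightarrow> real^'p" where
  "transfer_beta j k d r = axis j (- d / 2) + axis k (d * r)"

definition transfer_Theta :: "'p \<Rightarrow> 'p \<Rightarrow> real \<Rightarrow> real^'p^'p" where
  "transfer_Theta j k s = axis j (axis k (- s)) + axis k (axis j s)"

lemma whl_fit_transfer:
  "whl_fit X b0 (bp + transfer_beta j k d r) (bm + transfer_beta j k d r') (Th + transfer_Theta j k s)
     = whl_fit X b0 bp bm Th + (d * (r - r')) *\<^sub>R column k X"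
  by (simp add: vec_eq_iff transfer_beta_def transfer_Theta_def column_def outer_sq_def
      inner_add_left inner_add_right inner_diff_right inner_axis inner_axis' algebra_simps)

lemma whl_feasible_transfer:
  assumes feas: "whl_feasible bp bm Th" and jk: "j \<noteq> k"
    and eqj: "bp$j = bm$j" and k0: "bp$k = 0" "bm$k = 0"
    and d: "0 < d" "d \<le> \<bar>Th$j$k\<bar>" and r: "0 \<le> r" "r \<le> 1"
  shows "whl_feasible (bp + transfer_beta j k d r) (bm + transfer_beta j k d (1 - r))
      (Th + transfer_Theta j k (d * sgn (Th$j$k)))"
    (is "whl_feasible ?bp ?bm ?Th")
proof -
  define a where "a = Th$j$k"
  have bounds: "row_l1 (Th$q) \<le> bp$q + bm$q" "0 \<le> bp$q" "0 \<le> bm$q" "Th$q$q = 0" for q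
    using feas by (simp_all add: whl_feasible_def)
  have "\<bar>a\<bar> \<le> 2 * bp$j"
    using abs_le_row_l1[of "Th$j" k] bounds(1)[of j] eqj by (simp add: a_def)
  have row_k: "Th$k = 0"
  proof -
    have "\<bar>Th$k$c\<bar> \<le> 0" for c
      using abs_le_row_l1[of "Th$k" c] bounds(1)[of k] k0 by simp
    thus ?thesis by (simp add: vec_eq_iff)
  qed
  have "\<bar>a - d * sgn a\<bar> = \<bar>a\<bar> - d"
    using d by (cases "a > 0") (auto simp: a_def abs_if sgn_if)
  hence "row_l1 (Th$j + axis k (- (d * sgn a))) = row_l1 (Th$j) - d"
    by (simp add: row_l1_add_axis a_def)
  moreover have "row_l1 (Th$k + axis j (d * sgn a)) = d"
    using d row_l1_add_axis[of 0 j "d * sgn a"] by (simp add: row_k row_l1_def abs_mult a_def)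
  ultimately have "row_l1 (?Th$q) \<le> ?bp$q + ?bm$q" for q
    using jk bounds(1)[of q] bounds(1)[of j] eqj k0 d
    by (cases "q = j"; cases "q = k")
      (auto simp: transfer_beta_def transfer_Theta_def axis_def a_def algebra_simps)
  moreover have "0 \<le> ?bp$q" "0 \<le> ?bm$q" "?Th$q$q = 0" for q
    using jk bounds(2,3,4)[of q] \<open>\<bar>a\<bar> \<le> 2 * bp$j\<close> eqj d r
    by (auto simp: transfer_beta_def transfer_Theta_def axis_def a_def)
  ultimately show ?thesis
    by (simp add: whl_feasible_def)
qed

lemma whl_penalty_transfer:
  assumes jk: "j \<noteq> k" and kj: "Th$k$j = 0" and d: "0 < d" "d \<le> \<bar>Th$j$k\<bar>"
  shows "whl_penalty lam (bp + transfer_beta j k d r) (bm + transfer_beta j k d (1 - r))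
      (Th + transfer_Theta j k (d * sgn (Th$j$k))) = whl_penalty lam bp bm Th"
proof -
  define a s where "a = Th$j$k" and "s = d * sgn a"
  have "\<bar>a - s\<bar> = \<bar>a\<bar> - d" and "\<bar>s\<bar> = d"
    using d by (cases "a > 0"; auto simp: s_def a_def abs_if sgn_if)+
  moreover have "(Th + axis j (axis k (- s)))$k$j = 0"
    using jk kj by (simp add: axis_def)
  ultimately have "Theta_l1 (Th + transfer_Theta j k s) = Theta_l1 Th"
    using Theta_l1_add_axis_axis[OF jk, of Th "- s"]
      Theta_l1_add_axis_axis[OF jk[symmetric], of "Th + axis j (axis k (- s))" s]
    by (simp add: transfer_Theta_def add.assoc a_def)
  thus ?thesis
    by (simp add: whl_penalty_def transfer_beta_def sum.distrib sum_axis_nth s_def a_def algebra_simps)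
qed

lemma whl_solution_transfer_bound:
  assumes eps: "0 < eps" and sol: "whl_solution X lam eps y b0 bp bm Th" and jk: "j \<noteq> k"
    and eqj: "bp$j = bm$j" and k0: "bp$k = 0" "bm$k = 0" and d: "0 < d" "d \<le> \<bar>Th$j$k\<bar>"
  shows "d * (eps * \<bar>Th$j$k\<bar>) \<le> ((norm (column k X))\<^sup>2 / 2 + 7 / 4 * eps) * d\<^sup>2"
proof -
  define a u h where "a = Th$j$k" and "u = column k X" and "h = u \<bullet> (y - whl_fit X b0 bp bm Th)"
  define r :: real where "r = (if 0 \<le> h then 1 else 0)"
  \<comment> \<open>the new main effect of k is put on the side that does not increase the loss\<close>
  have r01: "0 \<le> r" "r \<le> 1" by (simp_all add: r_def)
  have feas: "whl_feasible bp bm Th"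
    using sol by (simp add: whl_solution_def)
  have "row_l1 (Th$k) \<le> bp$k + bm$k"
    using feas by (simp add: whl_feasible_def)
  hence kj: "Th$k$j = 0"
    using abs_le_row_l1[of "Th$k" j] k0 by simp
  have "a \<noteq> 0" using d by (auto simp: a_def)
  have inner_eq: "bp \<bullet> transfer_beta j k d r + bm \<bullet> transfer_beta j k d (1 - r)
      + Th \<bullet> transfer_Theta j k (d * sgn a) = - d * bp$j - d * \<bar>a\<bar>"
    using eqj k0 kj
    by (simp add: transfer_beta_def transfer_Theta_def inner_add_right inner_axis a_def abs_sgn)
  have sq_eq: "sq_norms (transfer_beta j k d r) (transfer_beta j k d (1 - r))
      (transfer_Theta j k (d * sgn a)) = 7 / 2 * d\<^sup>2"
    using \<open>a \<noteq> 0\<close> unfolding transfer_beta_def transfer_Theta_def sq_norms_def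
      power2_norm_axis_add_axis[OF jk] power2_norm_axis
    by (simp add: r_def power_mult_distrib power2_eq_square)
  have "(y - whl_fit X b0 bp bm Th) \<bullet> ((d * (r - (1 - r))) *\<^sub>R u)
      \<le> (norm ((d * (r - (1 - r))) *\<^sub>R u))\<^sup>2 / 2 + eps * (- d * bp$j - d * \<bar>a\<bar> + 7 / 2 * d\<^sup>2 / 2)"
    using whl_solution_perturbation_le[OF sol whl_feasible_transfer[OF feas jk eqj k0 d r01]
        whl_fit_transfer[of X b0 bp j k d r bm "1 - r" Th "d * sgn (Th$j$k)"]]
    unfolding whl_penalty_transfer[OF jk kj d] inner_eq[unfolded a_def] sq_eq[unfolded a_def] u_def
    by (simp add: a_def)
  moreover have "(y - whl_fit X b0 bp bm Th) \<bullet> ((d * (r - (1 - r))) *\<^sub>R u) = d * \<bar>h\<bar>"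
    by (simp add: h_def r_def inner_commute)
  moreover have "(norm ((d * (r - (1 - r))) *\<^sub>R u))\<^sup>2 = d\<^sup>2 * (norm u)\<^sup>2"
    by (simp add: r_def power_mult_distrib)
  moreover have "0 \<le> d * \<bar>h\<bar>" "0 \<le> eps * (d * bp$j)"
    using d eps feas by (simp_all add: whl_feasible_def)
  ultimately show ?thesis
    by (simp add: a_def u_def algebra_simps)
qed

lemma whl_solution_interaction_eq_0_if_inactive:
  assumes eps: "0 < eps" and sol: "whl_solution X lam eps y b0 bp bm Th" and jk: "j \<noteq> k"
    and eqj: "bp$j = bm$j" and k0: "bp$k = 0" "bm$k = 0"
  shows "Th$j$k = 0"
proof (rule ccontr)
  assume "Th$j$k \<noteq> 0"
  hence "eps * \<bar>Th$j$k\<bar> \<le> 0"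
    using whl_solution_transfer_bound[OF eps sol jk eqj k0]
    by (intro nonpos_if_linear_le_quadratic[of "\<bar>Th$j$k\<bar>"]) auto
  with eps \<open>Th$j$k \<noteq> 0\<close> show False
    by (simp add: mult_le_0_iff)
qed

lemma whl_solution_interaction_in_orth_set:
  assumes lam: "0 < lam" and eps: "0 < eps" and sol: "whl_solution X lam eps y b0 bp bm Th"
    and jk: "j \<noteq> k" and a: "Th$j$k \<noteq> 0" and eqj: "bp$j = bm$j" and eqk: "bp$k = bm$k"
  shows "\<exists>m. \<not> (\<exists>c. \<forall>i. X$i$m = c) \<and> y \<in> whl_orth_set X lam eps m"
proof -
  have feas: "whl_feasible bp bm Th"
    using sol by (simp add: whl_solution_def)
  have "0 < \<bar>Th$j$k\<bar>" using a by simp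
  also have "\<bar>Th$j$k\<bar> \<le> bp$j + bm$j"
    using abs_le_row_l1[of "Th$j" k] feas by (simp add: whl_feasible_def) (meson order_trans)
  finally have "0 < bp$j" using eqj by simp
  moreover have "0 < bp$k"
  proof -
    have "bp$k \<noteq> 0"
      using whl_solution_interaction_eq_0_if_inactive[OF eps sol jk eqj] eqk a by auto
    thus ?thesis using feas by (simp add: whl_feasible_def order_le_neq_trans)
  qed
  ultimately have orth: "column m X \<bullet> (y - whl_fit X b0 bp bm Th) = 0" if "m \<in> {j, k}" for m
    using whl_solution_residual_orth_column[OF eps sol] eqj eqk that by auto
  have "\<exists>m\<in>{j, k}. \<not> (\<exists>c. \<forall>i. X$i$m = c)"
  proof (rule ccontr)
    assume "\<not> ?thesis"
    then obtain cj ck where "\<And>i. X$i$j = cj" "\<And>i. X$i$k = ck" by auto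
    with whl_solution_interaction_eq_0_if_constant_columns[OF lam less_imp_le[OF eps] sol jk] a
    show False by blast
  qed
  then obtain m where "m \<in> {j, k}" and "\<not> (\<exists>c. \<forall>i. X$i$m = c)" ..
  moreover have "y \<in> whl_orth_set X lam eps m"
    unfolding whl_orth_set_def using sol orth[OF \<open>m \<in> {j, k}\<close>] by blast
  ultimately show ?thesis by blast
qed

lemma whl_solution_violation_in_orth_set:
  assumes lam: "0 < lam" and eps: "0 < eps" and sol: "whl_solution X lam eps y b0 bp bm Th"
    and "\<not> weak_hierarchy bp bm Th"
  shows "\<exists>m. \<not> (\<exists>c. \<forall>i. X$i$m = c) \<and> y \<in> whl_orth_set X lam eps m"
proof -
  obtain j k where jk: "j \<noteq> k" and "Th$j$k + Th$k$j \<noteq> 0" and bj: "bp$j = bm$j" and bk: "bp$k = bm$k"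
    using assms(4) unfolding weak_hierarchy_def by auto
  hence "Th$j$k \<noteq> 0 \<or> Th$k$j \<noteq> 0" by auto
  thus ?thesis
  proof
    assume "Th$j$k \<noteq> 0"
    from whl_solution_interaction_in_orth_set[OF lam eps sol jk this bj bk] show ?thesis .
  next
    assume "Th$k$j \<noteq> 0"
    from whl_solution_interaction_in_orth_set[OF lam eps sol jk[symmetric] this bk bj] show ?thesis .
  qed
qed

theorem mainTheorem3:
  fixes X :: "real^'p^'n" and lam eps :: real
    and M :: "'w measure" and Y :: "'w \<Rightarrow> real^'n"
  assumes "lam > 0" and "eps > 0"
    and "prob_space M"
    and "Y \<in> borel_measurable M"
    and "absolutely_continuous lborel (distr M lborel Y)"
  shows "AE w in M. \<forall>b0 bp bm Th. whl_solution X lam eps (Y w) b0 bp bm Th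
                        \<longrightarrow> weak_hierarchy bp bm Th"
proof -
  define N where "N = (\<Union>m\<in>{m. \<not> (\<exists>c. \<forall>i. X$i$m = c)}. closure (whl_orth_set X lam eps m))"
  have "N \<in> null_sets lborel"
    unfolding N_def using assms(1,2)
    by (intro null_sets_UN') (auto intro: null_sets_closure_whl_orth_set)
  hence "AE x in distr M lborel Y. x \<notin> N"
    by (intro absolutely_continuous_AE[OF _ assms(5)] AE_not_in) simp
  hence "AE w in M. Y w \<notin> N"
    using assms(4) by (intro AE_distrD[of Y M lborel]) simp_all
  thus ?thesis
  proof (rule eventually_mono, intro allI impI)
    fix w b0 bp bm Th assume "Y w \<notin> N" and sol: "whl_solution X lam eps (Y w) b0 bp bm Th"
    show "weak_hierarchy bp bm Th"
    proof (rule ccontr)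
      assume "\<not> weak_hierarchy bp bm Th"
      then obtain m where "\<not> (\<exists>c. \<forall>i. X$i$m = c)" and "Y w \<in> whl_orth_set X lam eps m"
        using whl_solution_violation_in_orth_set[OF assms(1,2) sol] by blast
      hence "Y w \<in> N"
        unfolding N_def using closure_subset by blast
      with \<open>Y w \<notin> N\<close> show False ..
    qed
  qed
qed

end
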